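(* Let $r>1$ and $C_r=\lceil 2\log_r 20\rceil$. There exists $n_0>0$, depending on $r$, such that the following holds. Let $k,\ell,m$ be positive integers such that the $(k,\ell,m)$-metafunnel has $n$ vertices with $n\ge n_0$, $m\ge r^{\sqrt{\log_r n}}$ and $2\le k\le\sqrt{\log_r n}$. Fix $x_0\in V_k$ and run the Moran process with fitness $r$ on the metafunnel with initial mutant $x_0$. Then the probability that the process goes extinct is at least $\frac{1}{r^k(\log n)^{C_r+7}}$.
   Context: Logarithms are natural unless a base is given. Moran process: given a directed graph $G$ and fitness $r$, one vertex $x_0$ is a mutant, the rest non-mutants. At each step a vertex $v$ is chosen with probability proportional to fitness (mutants $r$, non-mutants $1$), an out-neighbour $w$ of $v$ is chosen uniformly at random and the state of $v$ is copied to $w$. Extinction: eventually no vertex is a mutant. The $(k,\ell,m)$-metafunnel has vertex set $V_0\cup V_1\cup\dots\cup V_k$ (disjoint), where $V_0=\{v^*\}$ and for $i\in[k]$, $V_i$ is the disjoint union of sets $V_{i,1},\dots,V_{i,\ell}$ each of size $m^i$ (so $n=1+\ell\sum_{i=1}^k m^i$); its edge set is $(V_0\times V_k)\cup(V_1\times V_0)\cup\bigcup_{i\in[k-1]}\bigcup_{j\in[\ell]}(V_{i+1,j}\times V_{i,j})$. *)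

theory Defs
  imports Complex_Main
begin

text \<open>Vertex set V (finite), edge relation E (E v w: edge from v to w), fitness r.
  A state is the set S of mutant vertices.\<close>

definition fitness :: "real \<Rightarrow> 'a set \<Rightarrow> 'a \<Rightarrow> real" where
  "fitness r S v = (if v \<in> S then r else 1)"

definition total_fitness :: "'a set \<Rightarrow> real \<Rightarrow> 'a set \<Rightarrow> real" where
  "total_fitness V r S = (\<Sum>v\<in>V. fitness r S v)"

definition out_nbrs :: "'a set \<Rightarrow> ('a \<Rightarrow> 'a \<Rightarrow> bool) \<Rightarrow> 'a \<Rightarrow> 'a set" where
  "out_nbrs V E v = {w \<in> V. E v w}"

definition moran_update :: "'a set \<Rightarrow> 'a \<Rightarrow> 'a \<Rightarrow> 'a set" where
  "moran_update S v w = (if v \<in> S then insert w S else S - {w})"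

fun extinct_within :: "'a set \<Rightarrow> ('a \<Rightarrow> 'a \<Rightarrow> bool) \<Rightarrow> real \<Rightarrow> nat \<Rightarrow> 'a set \<Rightarrow> real" where
  "extinct_within V E r 0 S = (if S = {} then 1 else 0)"
| "extinct_within V E r (Suc t) S =
     (if S = {} then 1 else
      (\<Sum>v\<in>V. \<Sum>w\<in>out_nbrs V E v.
          (fitness r S v / total_fitness V r S) * (1 / real (card (out_nbrs V E v)))
          * extinct_within V E r t (moran_update S v w)))"

text \<open>Extinction probability = probability of eventually reaching the empty state
  = limit (supremum) of the nondecreasing probabilities of extinction within t steps.\<close>
definition extinction_prob :: "'a set \<Rightarrow> ('a \<Rightarrow> 'a \<Rightarrow> bool) \<Rightarrow> real \<Rightarrow> 'a set \<Rightarrow> real" where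
  "extinction_prob V E r S = (SUP t. extinct_within V E r t S)"

text \<open>Vertices: v* = (0,0,0); V_{i,j} = {(i,j,t) | t < m^i} for 1 \<le> i \<le> k, 1 \<le> j \<le> l.\<close>

definition mf_layer :: "nat \<Rightarrow> nat \<Rightarrow> nat \<Rightarrow> nat \<Rightarrow> (nat \<times> nat \<times> nat) set" where
  "mf_layer k l m i = {(i', j, t). i' = i \<and> 1 \<le> i \<and> i \<le> k \<and> 1 \<le> j \<and> j \<le> l \<and> t < m ^ i}"

definition mf_V :: "nat \<Rightarrow> nat \<Rightarrow> nat \<Rightarrow> (nat \<times> nat \<times> nat) set" where
  "mf_V k l m = {(0,0,0)} \<union> (\<Union>i\<in>{1..k}. mf_layer k l m i)"

definition mf_E :: "nat \<Rightarrow> nat \<Rightarrow> nat \<Rightarrow> (nat \<times> nat \<times> nat) \<Rightarrow> (nat \<times> nat \<times> nat) \<Rightarrow> bool" where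
  "mf_E k l m u v \<longleftrightarrow> u \<in> mf_V k l m \<and> v \<in> mf_V k l m \<and>
     ((u = (0,0,0) \<and> v \<in> mf_layer k l m k)
      \<or> (u \<in> mf_layer k l m 1 \<and> v = (0,0,0))
      \<or> (\<exists>i\<in>{1..k-1}. u \<in> mf_layer k l m (i+1) \<and> v \<in> mf_layer k l m i
            \<and> fst (snd u) = fst (snd v)))"

end

theory Submission
  imports Defs
begin

(*
  Give every vertex a weight: ln (1 + 2 r^(k+1)) on the top layer V_k, and 2/l (r/m)^(i+1) on
  V_i, the centre counting as i = 0. The potential exp (- sum of the weights of the mutants) is
  subharmonic for the Moran process as long as at most one top vertex is a mutant: a non-mutant
  replacing a mutant x raises it by a factor exp (weight x), and summed over the in-neighbours of
  x this outweighs r times the average loss caused by x reproducing onto its out-neighbours.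
  After subtracting its value for two top mutants, the potential becomes a lower bound for the
  extinction probability by a maximum principle (the graph is strongly connected). From a single
  top vertex this gives at least 1 / (r^k * 9r/2), which beats the claimed bound for large n.
*)

definition moran_expectation ::
  "'a set \<Rightarrow> ('a \<Rightarrow> 'a \<Rightarrow> bool) \<Rightarrow> real \<Rightarrow> ('a set \<Rightarrow> real) \<Rightarrow> 'a set \<Rightarrow> real" where
  "moran_expectation V E r h S = (\<Sum>v\<in>V. \<Sum>w\<in>out_nbrs V E v.
      (fitness r S v / total_fitness V r S) * (1 / real (card (out_nbrs V E v)))
      * h (moran_update S v w))"

lemma rtranclp_crossing_edge:
  assumes "R\<^sup>*\<^sup>* u w" "u \<notin> S" "w \<in> S"
  shows "\<exists>x y. R x y \<and> x \<notin> S \<and> y \<in> S"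
  using assms
proof (induction rule: rtranclp_induct)
  case (step y z)
  then show ?case by (cases "y \<in> S") auto
qed simp

locale moran_graph =
  fixes V :: "'a set" and E :: "'a \<Rightarrow> 'a \<Rightarrow> bool" and r :: real
  assumes finite_V: "finite V" and V_nonempty: "V \<noteq> {}" and r_ge_1: "1 \<le> r"
    and out_nbrs_nonempty: "\<And>v. v \<in> V \<Longrightarrow> out_nbrs V E v \<noteq> {}"
begin

abbreviation "T \<equiv> moran_expectation V E r"
abbreviation "p \<equiv> extinction_prob V E r"
abbreviation "ext \<equiv> extinct_within V E r"
abbreviation "W S \<equiv> total_fitness V r S"
abbreviation "outv v \<equiv> out_nbrs V E v"

definition step_prob :: "'a set \<Rightarrow> 'a \<Rightarrow> real" where
  "step_prob S v = (fitness r S v / W S) * (1 / real (card (outv v)))"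

lemma moran_expectation_eq: "T h S = (\<Sum>v\<in>V. \<Sum>w\<in>outv v. step_prob S v * h (moran_update S v w))"
  by (simp add: moran_expectation_def step_prob_def)

lemma finite_out_nbrs: "finite (outv v)"
  using finite_V by (simp add: out_nbrs_def)

lemma fitness_ge_1: "1 \<le> fitness r S v"
  using r_ge_1 by (simp add: fitness_def)

lemma total_fitness_pos: "0 < W S"
proof -
  obtain v where "v \<in> V" using V_nonempty by auto
  then have "fitness r S v \<le> W S" unfolding total_fitness_def
    by (intro member_le_sum) (auto simp: finite_V intro: order.trans[OF _ fitness_ge_1])
  then show ?thesis using fitness_ge_1[of S v] by linarith
qed

lemma step_prob_nonneg: "0 \<le> step_prob S v"
  using fitness_ge_1[of S v] total_fitness_pos[of S] by (simp add: step_prob_def)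

lemma step_prob_pos: "v \<in> V \<Longrightarrow> 0 < step_prob S v"
  using fitness_ge_1[of S v] total_fitness_pos[of S] out_nbrs_nonempty[of v] finite_out_nbrs[of v]
  by (auto simp: card_gt_0_iff step_prob_def)

lemma sum_step_prob: "(\<Sum>v\<in>V. \<Sum>w\<in>outv v. step_prob S v) = 1"
proof -
  have "(\<Sum>w\<in>outv v. step_prob S v) = fitness r S v / W S" if "v \<in> V" for v
    using out_nbrs_nonempty[OF that] finite_out_nbrs[of v]
    by (simp add: card_gt_0_iff step_prob_def)
  then have "(\<Sum>v\<in>V. \<Sum>w\<in>outv v. step_prob S v) = (\<Sum>v\<in>V. fitness r S v / W S)"
    by (rule sum.cong[OF refl])
  also have "\<dots> = W S / W S" unfolding total_fitness_def by (rule sum_divide_distrib[symmetric])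
  finally show ?thesis using total_fitness_pos[of S] by simp
qed

lemma moran_expectation_const: "T (\<lambda>_. c) S = c"
proof -
  have "T (\<lambda>_. c) S = (\<Sum>v\<in>V. \<Sum>w\<in>outv v. step_prob S v) * c"
    by (simp add: moran_expectation_eq sum_distrib_right mult.assoc)
  then show ?thesis using sum_step_prob by simp
qed

lemma moran_expectation_mono: "(\<And>S'. h S' \<le> h' S') \<Longrightarrow> T h S \<le> T h' S"
  unfolding moran_expectation_eq by (intro sum_mono mult_left_mono) (auto intro: step_prob_nonneg)

lemma moran_expectation_diff: "T h S - T h' S = T (\<lambda>S. h S - h' S) S"
  by (simp add: moran_expectation_eq sum_subtractf[symmetric] right_diff_distrib)

lemma moran_expectation_minus_const:
  "T h S - c = (\<Sum>v\<in>V. \<Sum>w\<in>outv v. step_prob S v * (h (moran_update S v w) - c))"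
proof -
  have "T h S - c = T h S - (\<Sum>v\<in>V. \<Sum>w\<in>outv v. step_prob S v) * c"
    using sum_step_prob by simp
  then show ?thesis
    unfolding moran_expectation_eq
    by (simp only: right_diff_distrib sum_subtractf sum_distrib_right)
qed

lemma moran_update_subset: "S \<subseteq> V \<Longrightarrow> w \<in> outv v \<Longrightarrow> moran_update S v w \<subseteq> V"
  by (auto simp: moran_update_def out_nbrs_def)

lemma extinct_within_Suc: "S \<noteq> {} \<Longrightarrow> ext (Suc t) S = T (ext t) S"
  by (simp add: moran_expectation_def)

declare extinct_within.simps(2)[simp del]

lemma extinct_within_empty: "ext t {} = 1"
  by (cases t) (auto simp: extinct_within.simps)

lemma extinct_within_bounds: "0 \<le> ext t S \<and> ext t S \<le> 1"
proof (induction t arbitrary: S)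
  case (Suc t)
  then have "T (\<lambda>_. 0) S \<le> T (ext t) S" "T (ext t) S \<le> T (\<lambda>_. 1) S"
    by (auto intro!: moran_expectation_mono)
  then show ?case
    by (cases "S = {}")
       (simp_all add: extinct_within_empty extinct_within_Suc moran_expectation_const)
qed simp

lemma extinct_within_mono: "ext t S \<le> ext (Suc t) S"
proof (induction t arbitrary: S)
  case 0
  then show ?case
    using extinct_within_bounds[of "Suc 0" S] by (cases "S = {}") (auto simp: extinct_within_empty)
next
  case (Suc t)
  then show ?case
    by (cases "S = {}")
       (auto simp: extinct_within_empty extinct_within_Suc intro: moran_expectation_mono)
qed

lemma bdd_above_extinct_within: "bdd_above (range (\<lambda>t. ext t S))"
  using extinct_within_bounds by (intro bdd_aboveI2[where M=1]) auto

lemma extinct_within_le_extinction_prob: "ext t S \<le> p S"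
  unfolding extinction_prob_def by (rule cSUP_upper[OF _ bdd_above_extinct_within]) simp

lemma extinction_prob_nonneg: "0 \<le> p S"
  using extinct_within_le_extinction_prob[of 0 S] extinct_within_bounds[of 0 S] by linarith

lemma extinction_prob_empty: "p {} = 1"
proof -
  have "p {} \<le> 1"
    unfolding extinction_prob_def by (rule cSUP_least) (auto simp: extinct_within_bounds)
  then show ?thesis using extinct_within_le_extinction_prob[of 0 "{}"] by simp
qed

lemma extinct_within_tendsto: "(\<lambda>t. ext t S) \<longlonglongrightarrow> p S"
  unfolding extinction_prob_def
  by (rule LIMSEQ_incseq_SUP[OF bdd_above_extinct_within incseq_SucI]) (rule extinct_within_mono)

lemma moran_expectation_extinction_prob: "S \<noteq> {} \<Longrightarrow> T p S \<le> p S"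
proof -
  assume S: "S \<noteq> {}"
  have "(\<lambda>t. T (ext t) S) \<longlonglongrightarrow> T p S"
    unfolding moran_expectation_eq by (intro tendsto_sum tendsto_mult_left extinct_within_tendsto)
  moreover have "\<forall>t. T (ext t) S \<le> p S"
    using extinct_within_le_extinction_prob[of "Suc _" S] S by (simp add: extinct_within_Suc)
  ultimately show ?thesis by (intro LIMSEQ_le_const2) auto
qed

lemma moran_expectation_attains_max:
  assumes le_M: "\<And>S'. S' \<subseteq> V \<Longrightarrow> h S' \<le> M" and S: "S \<subseteq> V" and M_le: "M \<le> T h S"
    and v: "v \<in> V" and w: "w \<in> outv v"
  shows "h (moran_update S v w) = M"
proof -
  let ?gap = "\<lambda>v w. step_prob S v * (M - h (moran_update S v w))"
  have gap_nonneg: "0 \<le> ?gap v w" if "w \<in> outv v" for v w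
    using step_prob_nonneg[of S v] le_M[OF moran_update_subset[OF S that]] by simp
  have "(\<Sum>v\<in>V. \<Sum>w\<in>outv v. ?gap v w) = M - T h S"
    using moran_expectation_minus_const[of h S M]
    by (simp add: sum_negf[symmetric] algebra_simps)
  then have "(\<Sum>v\<in>V. \<Sum>w\<in>outv v. ?gap v w) = 0"
    using M_le gap_nonneg by (smt (verit) sum_nonneg)
  then have "(\<Sum>w\<in>outv v. ?gap v w) = 0"
    using v gap_nonneg by (subst (asm) sum_nonneg_eq_0_iff) (auto simp: finite_V intro: sum_nonneg)
  then have "?gap v w = 0"
    using w gap_nonneg by (subst (asm) sum_nonneg_eq_0_iff) (auto simp: finite_out_nbrs)
  then show ?thesis using step_prob_pos[OF v, of S] by simp
qed

text \<open>A minimal set maximising \<open>g - p\<close> would pass its maximum on to a smaller set along an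
  edge entering it.\<close>
lemma subharmonic_le_extinction_prob:
  fixes g :: "'a set \<Rightarrow> real"
  assumes connected: "\<And>u w. u \<in> V \<Longrightarrow> w \<in> V \<Longrightarrow> (\<lambda>x y. x \<in> V \<and> E x y)\<^sup>*\<^sup>* u w"
    and g_empty: "g {} \<le> 1" and g_V: "g V \<le> 0"
    and subharmonic: "\<And>S. S \<subseteq> V \<Longrightarrow> S \<noteq> {} \<Longrightarrow> S \<noteq> V \<Longrightarrow> p S < g S \<Longrightarrow> g S \<le> T g S"
    and S0: "S0 \<subseteq> V"
  shows "g S0 \<le> p S0"
proof (rule ccontr)
  assume "\<not> g S0 \<le> p S0"
  define d where "d S = g S - p S" for S
  define M where "M = Max (d ` Pow V)"
  have finite_d: "finite (d ` Pow V)" using finite_V by simp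
  have d_le_M: "d S \<le> M" if "S \<subseteq> V" for S
    unfolding M_def using that by (intro Max_ge[OF finite_d]) auto
  have "M \<in> d ` Pow V" unfolding M_def by (rule Max_in[OF finite_d]) auto
  then obtain S1 where "S1 \<subseteq> V" "d S1 = M" by auto
  then obtain S where S: "S \<subseteq> V" "d S = M"
    and S_min: "\<And>S'. S' \<subseteq> V \<and> d S' = M \<Longrightarrow> card S \<le> card S'"
    using ex_has_least_nat[of "\<lambda>S. S \<subseteq> V \<and> d S = M" S1 card] by blast
  have M_pos: "0 < M" using d_le_M[OF S0] \<open>\<not> g S0 \<le> p S0\<close> by (simp add: d_def)
  have "S \<noteq> {}" using S M_pos g_empty extinction_prob_empty by (auto simp: d_def)
  moreover have "S \<noteq> V" using S M_pos g_V extinction_prob_nonneg[of V] by (auto simp: d_def)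
  moreover have "p S < g S" using S M_pos by (simp add: d_def)
  ultimately have "g S \<le> T g S" "T p S \<le> p S"
    using subharmonic S moran_expectation_extinction_prob by auto
  then have M_le: "M \<le> T d S"
    using S moran_expectation_diff[of g S p] by (simp add: d_def[abs_def])
  obtain u w where "u \<in> V" "u \<notin> S" "w \<in> S"
    using \<open>S \<noteq> {}\<close> \<open>S \<noteq> V\<close> S by auto
  then obtain v w where v: "v \<in> V" "v \<notin> S" and w: "w \<in> S" "E v w"
    using rtranclp_crossing_edge[OF connected] S by blast
  have "moran_update S v w = S - {w}" using v by (simp add: moran_update_def)
  moreover have "w \<in> outv v" using w S by (auto simp: out_nbrs_def)
  ultimately have "d (S - {w}) = M"
    using moran_expectation_attains_max[OF d_le_M S(1) M_le v(1)] by metis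
  then have "card S \<le> card (S - {w})" using S_min[of "S - {w}"] S by auto
  moreover have "card (S - {w}) < card S"
    using w S finite_V by (meson card_Diff1_less finite_subset)
  ultimately show False by simp
qed

definition potential_jump :: "('a \<Rightarrow> real) \<Rightarrow> 'a set \<Rightarrow> 'a \<Rightarrow> 'a \<Rightarrow> real" where
  "potential_jump \<pi> S v w =
     (if v \<in> S then (if w \<in> S then 0 else exp (- \<pi> w) - 1)
      else (if w \<in> S then exp (\<pi> w) - 1 else 0))"

lemma exp_potential_update:
  assumes "finite S"
  shows "exp (- (\<Sum>x\<in>moran_update S v w. \<pi> x)) - exp (- (\<Sum>x\<in>S. \<pi> x))
       = exp (- (\<Sum>x\<in>S. \<pi> x)) * potential_jump \<pi> S v w"
  using assms
  by (cases "v \<in> S"; cases "w \<in> S")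
     (auto simp: moran_update_def potential_jump_def insert_absorb sum_diff1 exp_add[symmetric]
        algebra_simps)

lemma moran_expectation_exp_potential:
  fixes \<pi> :: "'a \<Rightarrow> real" and c :: real
  assumes "finite S"
  defines "f \<equiv> \<lambda>S. exp (- (\<Sum>x\<in>S. \<pi> x)) - c"
  shows "T f S - f S = exp (- (\<Sum>x\<in>S. \<pi> x)) / W S *
     (\<Sum>v\<in>V. \<Sum>w\<in>outv v. fitness r S v * potential_jump \<pi> S v w / real (card (outv v)))"
proof -
  have "T f S - f S = (\<Sum>v\<in>V. \<Sum>w\<in>outv v. step_prob S v * (f (moran_update S v w) - f S))"
    by (rule moran_expectation_minus_const)
  also have "\<dots> = (\<Sum>v\<in>V. \<Sum>w\<in>outv v. exp (- (\<Sum>x\<in>S. \<pi> x)) / W S *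
      (fitness r S v * potential_jump \<pi> S v w / real (card (outv v))))"
    using exp_potential_update[OF assms(1)] by (simp add: f_def step_prob_def mult.left_commute)
  finally show ?thesis by (simp add: sum_distrib_left)
qed

end

definition mf_block :: "nat \<Rightarrow> nat \<Rightarrow> nat \<Rightarrow> (nat \<times> nat \<times> nat) set" where
  "mf_block m i j = (\<lambda>t. (i, j, t)) ` {..<m ^ i}"

lemma card_mf_block: "card (mf_block m i j) = m ^ i"
  unfolding mf_block_def by (subst card_image) (auto simp: inj_on_def)

lemma mf_layer_eq:
  "mf_layer k l m i = (if 1 \<le> i \<and> i \<le> k then (\<lambda>(j,t). (i,j,t)) ` ({1..l} \<times> {..<m^i}) else {})"
  unfolding mf_layer_def by (auto simp: image_iff)

lemma card_mf_layer: "1 \<le> i \<Longrightarrow> i \<le> k \<Longrightarrow> card (mf_layer k l m i) = l * m ^ i"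
  unfolding mf_layer_eq by (simp, subst card_image) (auto simp: inj_on_def)

lemma mem_mf_layer:
  "(a,b,c) \<in> mf_layer k l m i \<longleftrightarrow> a = i \<and> 1 \<le> i \<and> i \<le> k \<and> 1 \<le> b \<and> b \<le> l \<and> c < m ^ i"
  unfolding mf_layer_def by auto

lemma mem_mf_V:
  "(a,b,c) \<in> mf_V k l m \<longleftrightarrow> (a,b,c) = (0,0,0) \<or> (1 \<le> a \<and> a \<le> k \<and> 1 \<le> b \<and> b \<le> l \<and> c < m ^ a)"
  unfolding mf_V_def by (auto simp: mem_mf_layer)

lemma finite_mf_V: "finite (mf_V k l m)"
  unfolding mf_V_def mf_layer_eq by auto

lemma mf_E_iff:
  "2 \<le> k \<Longrightarrow> mf_E k l m (a,b,c) (a',b',c') \<longleftrightarrow>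
     (a,b,c) \<in> mf_V k l m \<and> (a',b',c') \<in> mf_V k l m \<and>
     ((a,b,c) = (0,0,0) \<and> a' = k \<or> a = 1 \<and> (a',b',c') = (0,0,0) \<or> 2 \<le> a \<and> a' + 1 = a \<and> b = b')"
  unfolding mf_E_def by (auto simp: mem_mf_layer mem_mf_V)

locale metafunnel =
  fixes k l m :: nat
  assumes k_ge_2: "2 \<le> k" and l_pos: "1 \<le> l" and m_pos: "1 \<le> m"
begin

abbreviation "VV \<equiv> mf_V k l m"
abbreviation "EE \<equiv> mf_E k l m"

lemma out_nbrs_centre: "out_nbrs VV EE (0,0,0) = mf_layer k l m k"
  by (rule set_eqI, rename_tac x, case_tac x)
     (use k_ge_2 in \<open>auto simp: out_nbrs_def mf_E_iff mem_mf_V mem_mf_layer\<close>)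

lemma out_nbrs_bottom: "(1,j,t) \<in> VV \<Longrightarrow> out_nbrs VV EE (1,j,t) = {(0,0,0)}"
  by (rule set_eqI, rename_tac x, case_tac x)
     (use k_ge_2 in \<open>auto simp: out_nbrs_def mf_E_iff mem_mf_V mem_mf_layer\<close>)

lemma out_nbrs_upper: "(a,j,t) \<in> VV \<Longrightarrow> 2 \<le> a \<Longrightarrow> out_nbrs VV EE (a,j,t) = mf_block m (a-1) j"
  by (rule set_eqI, rename_tac x, case_tac x)
     (use k_ge_2 in \<open>auto simp: out_nbrs_def mf_E_iff mem_mf_V mem_mf_layer mf_block_def\<close>)

lemma in_nbrs_centre: "{v \<in> VV. EE v (0,0,0)} = mf_layer k l m 1"
  by (rule set_eqI, rename_tac x, case_tac x)
     (use k_ge_2 in \<open>auto simp: mf_E_iff mem_mf_V mem_mf_layer\<close>)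

lemma in_nbrs_middle:
  "(a,j,t) \<in> VV \<Longrightarrow> 1 \<le> a \<Longrightarrow> a < k \<Longrightarrow> {v \<in> VV. EE v (a,j,t)} = mf_block m (a+1) j"
  by (rule set_eqI, rename_tac x, case_tac x)
     (use k_ge_2 in \<open>auto simp: mf_E_iff mem_mf_V mem_mf_layer mf_block_def\<close>)

lemma in_nbrs_top: "(k,j,t) \<in> VV \<Longrightarrow> {v \<in> VV. EE v (k,j,t)} = {(0,0,0)}"
  by (rule set_eqI, rename_tac x, case_tac x)
     (use k_ge_2 in \<open>auto simp: mf_E_iff mem_mf_V mem_mf_layer\<close>)

lemma out_nbrs_nonempty: "v \<in> VV \<Longrightarrow> out_nbrs VV EE v \<noteq> {}"
proof -
  assume v: "v \<in> VV"
  obtain a j t where v_eq: "v = (a,j,t)" by (cases v)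
  have block: "(a-1,j,0) \<in> mf_block m (a-1) j" using m_pos by (auto simp: mf_block_def)
  consider "a = 0" | "a = 1" | "2 \<le> a" by linarith
  then show ?thesis
  proof cases
    case 1
    then have "v = (0,0,0)" using v v_eq by (auto simp: mem_mf_V)
    moreover have "(k,1,0) \<in> mf_layer k l m k" using k_ge_2 l_pos m_pos by (simp add: mem_mf_layer)
    ultimately show ?thesis using out_nbrs_centre by auto
  qed (use out_nbrs_bottom out_nbrs_upper v v_eq block in auto)
qed

lemma reaches_centre: "(a,j,t) \<in> VV \<Longrightarrow> 1 \<le> a \<Longrightarrow> EE\<^sup>*\<^sup>* (a,j,t) (0,0,0)"
proof (induction a arbitrary: t)
  case (Suc a)
  show ?case
  proof (cases "a = 0")
    case True
    then have "EE (Suc a,j,t) (0,0,0)" using Suc.prems k_ge_2 by (simp add: mf_E_iff mem_mf_V)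
    then show ?thesis by auto
  next
    case False
    have "(a,j,0) \<in> VV" using Suc.prems False m_pos by (auto simp: mem_mf_V)
    then have "EE (Suc a,j,t) (a,j,0)" using Suc.prems False k_ge_2 by (simp add: mf_E_iff)
    moreover have "EE\<^sup>*\<^sup>* (a,j,0) (0,0,0)" using Suc.IH[OF \<open>(a,j,0) \<in> VV\<close>] False by simp
    ultimately show ?thesis by (rule converse_rtranclp_into_rtranclp)
  qed
qed simp

lemma centre_reaches:
  assumes "(a,j,t) \<in> VV" "1 \<le> a"
  shows "EE\<^sup>*\<^sup>* (0,0,0) (a,j,t)"
proof -
  have "a \<le> k" using assms by (simp add: mem_mf_V)
  then show ?thesis using assms
  proof (induction a arbitrary: t rule: inc_induct)
    case base
    then have "EE (0,0,0) (k,j,t)" using k_ge_2 by (simp add: mf_E_iff mem_mf_V)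
    then show ?case by auto
  next
    case (step a)
    have "(Suc a, j, 0) \<in> VV" using step m_pos by (auto simp: mem_mf_V)
    then have "EE (Suc a, j, 0) (a,j,t)" using step k_ge_2 by (simp add: mf_E_iff)
    moreover have "EE\<^sup>*\<^sup>* (0,0,0) (Suc a, j, 0)" using step.IH[OF \<open>(Suc a, j, 0) \<in> VV\<close>] by simp
    ultimately show ?case by (simp add: rtranclp.rtrancl_into_rtrancl)
  qed
qed

lemma strongly_connected: "u \<in> VV \<Longrightarrow> w \<in> VV \<Longrightarrow> (\<lambda>x y. x \<in> VV \<and> EE x y)\<^sup>*\<^sup>* u w"
proof -
  assume u: "u \<in> VV" and w: "w \<in> VV"
  have "EE\<^sup>*\<^sup>* u (0,0,0)"
    using u reaches_centre by (cases u) (auto simp: mem_mf_V)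
  moreover have "EE\<^sup>*\<^sup>* (0,0,0) w"
    using w centre_reaches by (cases w) (auto simp: mem_mf_V)
  moreover have "(\<lambda>x y. x \<in> VV \<and> EE x y) = EE" by (intro ext) (auto simp: mf_E_def)
  ultimately show ?thesis by simp
qed

end

definition mf_weight :: "nat \<Rightarrow> nat \<Rightarrow> nat \<Rightarrow> real \<Rightarrow> nat \<times> nat \<times> nat \<Rightarrow> real" where
  "mf_weight k l m r x =
     (if fst x = k then ln (1 + 2 * r ^ (k+1)) else 2 / real l * (r / real m) ^ (fst x + 1))"

locale metafunnel_fitness = metafunnel +
  fixes r :: real
  assumes r_gt_1: "1 < r" and m_ge_2r: "2 * r \<le> real m" and m_ge_ln: "2 * r / real m \<le> ln r"
begin

sublocale moran: moran_graph VV EE r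
proof
  show "finite VV" by (rule finite_mf_V)
  show "VV \<noteq> {}" by (auto simp: mf_V_def)
  show "1 \<le> r" using r_gt_1 by simp
qed (rule out_nbrs_nonempty)

abbreviation "\<pi> \<equiv> mf_weight k l m r"
abbreviation "gain x \<equiv> exp (\<pi> x) - 1"
abbreviation "loss x \<equiv> 1 - exp (- \<pi> x)"
abbreviation "top_weight \<equiv> ln (1 + 2 * r ^ (k+1))"
abbreviation "\<delta> \<equiv> 2 * r ^ (k+1) / (real l * real m ^ k)"
abbreviation "deg v \<equiv> real (card (out_nbrs VV EE v))"

lemma m_real_pos: "0 < real m" using m_pos by simp

lemma r_div_m_le: "r / real m \<le> 1/2"
  using m_ge_2r r_gt_1 m_real_pos by (simp add: divide_le_eq)

lemma weight_nonneg: "0 \<le> \<pi> x"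
  using r_gt_1 m_real_pos by (auto simp: mf_weight_def)

lemma loss_le_weight: "loss x \<le> \<pi> x"
  using exp_ge_add_one_self[of "- \<pi> x"] by simp

lemma weight_le_gain: "\<pi> x \<le> gain x"
  using exp_ge_add_one_self[of "\<pi> x"] by linarith

lemma loss_nonneg: "0 \<le> loss x"
  using weight_nonneg[of x] by simp

lemma top_weight_pos: "0 < top_weight"
  using r_gt_1 by (intro ln_gt_zero) (simp add: add_pos_nonneg)

lemma gain_top: "fst x = k \<Longrightarrow> gain x = 2 * r ^ (k+1)"
  using r_gt_1 by (simp add: mf_weight_def add_pos_nonneg)

lemma exp_weight_le_r: "fst x \<noteq> k \<Longrightarrow> exp (\<pi> x) \<le> r"
proof -
  assume "fst x \<noteq> k"
  then have weight_eq: "\<pi> x = 2 / real l * (r / real m) ^ (fst x + 1)" by (simp add: mf_weight_def)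
  have "(r / real m) ^ (fst x + 1) \<le> (r / real m) ^ 1"
    using r_div_m_le r_gt_1 m_real_pos by (intro power_decreasing) auto
  moreover have "2 / real l \<le> 2" using l_pos by (simp add: divide_le_eq)
  ultimately have "\<pi> x \<le> 2 * (r / real m)" unfolding weight_eq
    using r_gt_1 m_real_pos by (intro mult_mono) auto
  also have "\<dots> \<le> ln r" using m_ge_ln by simp
  finally show ?thesis using r_gt_1 by (metis exp_le_cancel_iff exp_ln less_trans zero_less_one)
qed

lemma delta_le_r: "\<delta> \<le> r"
proof -
  have "2 * r ^ k \<le> 2 ^ k * r ^ k"
    using k_ge_2 r_gt_1
    by (intro mult_right_mono) (auto intro: order.trans[OF _ power_increasing[of 1 k 2]])
  also have "\<dots> = (2 * r) ^ k" by (simp add: power_mult_distrib)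
  also have "\<dots> \<le> real m ^ k" using m_ge_2r r_gt_1 by (intro power_mono) auto
  also have "\<dots> \<le> real l * real m ^ k" using l_pos m_real_pos by simp
  finally have "r * (2 * r ^ k) \<le> r * (real l * real m ^ k)" using r_gt_1 by simp
  moreover have "0 < real l * real m ^ k" using l_pos m_real_pos by simp
  ultimately show ?thesis by (simp add: divide_le_eq algebra_simps)
qed

definition mean_out_loss :: "nat \<times> nat \<times> nat \<Rightarrow> real" where
  "mean_out_loss v = (\<Sum>w\<in>out_nbrs VV EE v. loss w) / deg v"

definition in_gain :: "(nat \<times> nat \<times> nat) set \<Rightarrow> nat \<times> nat \<times> nat \<Rightarrow> real" where
  "in_gain S x =
     (\<Sum>v\<in>{v \<in> VV. EE v x}. (gain x - (if v \<in> S \<and> fst x = k then gain x else 0)) / deg v)"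

definition edge_gain :: "(nat \<times> nat \<times> nat) set \<Rightarrow> nat \<times> nat \<times> nat \<Rightarrow> nat \<times> nat \<times> nat \<Rightarrow> real" where
  "edge_gain S v w = (if w \<in> S then gain w - (if v \<in> S \<and> fst w = k then gain w else 0) else 0)"

definition drift_lb :: "(nat \<times> nat \<times> nat) set \<Rightarrow> nat \<times> nat \<times> nat \<Rightarrow> real" where
  "drift_lb S x =
     (if x = (0,0,0) then r else 0) - (if fst x = k then (if (0,0,0) \<in> S then \<delta> else 0) else 0)"

lemma mean_out_loss_le:
  assumes "v \<in> VV" "\<And>w. w \<in> out_nbrs VV EE v \<Longrightarrow> loss w \<le> B"
  shows "mean_out_loss v \<le> B"
proof -
  have "0 < deg v"
    using assms(1) out_nbrs_nonempty moran.finite_out_nbrs by (simp add: card_gt_0_iff)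
  then show ?thesis
    using sum_bounded_above[of "out_nbrs VV EE v" loss B] assms(2)
    by (simp add: mean_out_loss_def divide_le_eq mult.commute)
qed

lemma vertex_drift_centre: "drift_lb S (0,0,0) \<le> in_gain S (0,0,0) - r * mean_out_loss (0,0,0)"
proof -
  have "in_gain S (0,0,0) = (\<Sum>v\<in>mf_layer k l m 1. gain (0,0,0))"
    unfolding in_gain_def in_nbrs_centre
  proof (intro sum.cong refl)
    fix v assume v: "v \<in> mf_layer k l m 1"
    then obtain j t where "v = (1,j,t)" "(1,j,t) \<in> VV"
      using k_ge_2 by (cases v) (auto simp: mem_mf_layer mem_mf_V)
    then have "deg v = 1" using out_nbrs_bottom by simp
    then show "(gain (0,0,0) - (if v \<in> S \<and> fst (0::nat,0::nat,0::nat) = k then gain (0,0,0) else 0))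
        / deg v = gain (0,0,0)"
      using k_ge_2 by simp
  qed
  also have "\<dots> = real l * real m * gain (0,0,0)" using k_ge_2 by (simp add: card_mf_layer)
  also have "\<dots> \<ge> real l * real m * (2 / real l * (r / real m))"
    using weight_le_gain[of "(0,0,0)"] k_ge_2 l_pos m_real_pos
    by (intro mult_left_mono) (auto simp: mf_weight_def)
  finally have "2 * r \<le> in_gain S (0,0,0)" using l_pos m_real_pos by simp
  moreover have "mean_out_loss (0,0,0) \<le> 1" by (rule mean_out_loss_le) (auto simp: mem_mf_V)
  then have "r * mean_out_loss (0,0,0) \<le> r" using r_gt_1 by simp
  moreover have "drift_lb S (0,0,0) = r" using k_ge_2 by (simp add: drift_lb_def)
  ultimately show ?thesis by linarith
qed

lemma mean_out_loss_below:
  assumes x: "(a,j,t) \<in> VV" and a: "1 \<le> a"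
  shows "mean_out_loss (a,j,t) \<le> 2 / real l * (r / real m) ^ a"
proof (rule mean_out_loss_le[OF x])
  fix w assume w: "w \<in> out_nbrs VV EE (a,j,t)"
  have "fst w = a - 1"
  proof (cases "a = 1")
    case True then show ?thesis using w out_nbrs_bottom x by auto
  next
    case False then show ?thesis using w out_nbrs_upper[OF x] a by (auto simp: mf_block_def)
  qed
  moreover have "a \<le> k" using x a by (simp add: mem_mf_V)
  ultimately have "fst w \<noteq> k" "fst w + 1 = a" using a by auto
  then have "\<pi> w = 2 / real l * (r / real m) ^ a" by (simp add: mf_weight_def)
  then show "loss w \<le> 2 / real l * (r / real m) ^ a" using loss_le_weight[of w] by simp
qed

lemma vertex_drift_middle:
  assumes x: "(a,j,t) \<in> VV" and a: "1 \<le> a" "a < k"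
  shows "drift_lb S (a,j,t) \<le> in_gain S (a,j,t) - r * mean_out_loss (a,j,t)"
proof -
  have "in_gain S (a,j,t) = (\<Sum>v\<in>mf_block m (a+1) j. gain (a,j,t) / real m ^ a)"
    unfolding in_gain_def in_nbrs_middle[OF x a]
  proof (intro sum.cong refl)
    fix v assume "v \<in> mf_block m (a+1) j"
    then obtain t' where v: "v = (a+1,j,t')" "(a+1,j,t') \<in> VV"
      using x a by (auto simp: mf_block_def mem_mf_V)
    then have "deg v = real m ^ a" using out_nbrs_upper[OF v(2)] a by (simp add: card_mf_block)
    then show "(gain (a,j,t) - (if v \<in> S \<and> fst (a,j,t) = k then gain (a,j,t) else 0)) / deg v
        = gain (a,j,t) / real m ^ a"
      using a by simp
  qed
  also have "\<dots> = real m * gain (a,j,t)" using m_real_pos by (simp add: card_mf_block)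
  also have "\<dots> \<ge> real m * (2 / real l * (r / real m) ^ (a+1))"
    using weight_le_gain[of "(a,j,t)"] a m_real_pos
    by (intro mult_left_mono) (auto simp: mf_weight_def)
  also have "real m * (2 / real l * (r / real m) ^ (a+1)) = r * (2 / real l * (r / real m) ^ a)"
    using m_real_pos by (simp add: field_simps)
  finally have "r * (2 / real l * (r / real m) ^ a) \<le> in_gain S (a,j,t)" .
  moreover have "r * mean_out_loss (a,j,t) \<le> r * (2 / real l * (r / real m) ^ a)"
    using mean_out_loss_below[OF x a(1)] r_gt_1 by (intro mult_left_mono) auto
  moreover have "drift_lb S (a,j,t) = 0" using a by (simp add: drift_lb_def)
  ultimately show ?thesis by linarith
qed

lemma vertex_drift_top:
  assumes x: "(k,j,t) \<in> VV"
  shows "drift_lb S (k,j,t) \<le> in_gain S (k,j,t) - r * mean_out_loss (k,j,t)"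
proof -
  have "in_gain S (k,j,t)
      = (gain (k,j,t) - (if (0,0,0) \<in> S then gain (k,j,t) else 0)) / (real l * real m ^ k)"
    unfolding in_gain_def in_nbrs_top[OF x]
    using k_ge_2 by (simp add: out_nbrs_centre card_mf_layer)
  then have in_gain_eq: "in_gain S (k,j,t) = (if (0,0,0) \<in> S then 0 else \<delta>)"
    using gain_top[of "(k,j,t)"] by simp
  have "r * mean_out_loss (k,j,t) \<le> r * (2 / real l * (r / real m) ^ k)"
    using mean_out_loss_below[OF x] k_ge_2 r_gt_1 by (intro mult_left_mono) auto
  also have "\<dots> = \<delta>" using m_real_pos l_pos by (simp add: field_simps power_divide)
  finally show ?thesis using in_gain_eq k_ge_2 by (simp add: drift_lb_def)
qed

lemma vertex_drift_ge:
  assumes x: "x \<in> VV"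
  shows "drift_lb S x \<le> in_gain S x - r * mean_out_loss x"
proof -
  obtain a j t where x_eq: "x = (a,j,t)" by (cases x)
  consider "a = 0" | "1 \<le> a" "a < k" | "a = k"
    using x x_eq by (fastforce simp: mem_mf_V)
  then show ?thesis
  proof cases
    case 1
    then have "x = (0,0,0)" using x x_eq by (auto simp: mem_mf_V)
    then show ?thesis using vertex_drift_centre by simp
  qed (use vertex_drift_middle vertex_drift_top x x_eq in auto)
qed

text \<open>A mutant \<open>v\<close> replacing a mutant \<open>w\<close> changes nothing, but the bound charges it
  \<open>gain w - r * loss w\<close>; this is nonpositive off the top layer since \<open>exp (\<pi> w) \<le> r\<close>.\<close>
lemma potential_jump_ge:
  "edge_gain S v w - (if v \<in> S then r * loss w else 0)
     \<le> fitness r S v * moran.potential_jump \<pi> S v w"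
proof -
  have Ey: "exp (- \<pi> w) = 1 / exp (\<pi> w)" by (simp add: exp_minus field_simps)
  have E1: "exp (\<pi> w) \<ge> 1" using weight_nonneg[of w] by simp
  have key: "gain w - r * loss w \<le> 0" if "fst w \<noteq> k"
  proof -
    have Er: "exp (\<pi> w) \<le> r" using exp_weight_le_r[OF that] .
    have "gain w - r * loss w = (exp (\<pi> w) - 1) * (exp (\<pi> w) - r) / exp (\<pi> w)"
      using E1 unfolding Ey by (simp add: field_simps)
    also have "\<dots> \<le> 0" using E1 Er by (intro divide_nonpos_pos mult_nonneg_nonpos) auto
    finally show ?thesis .
  qed
  have "r * loss w \<ge> 0" using loss_nonneg[of w] r_gt_1 by simp
  then show ?thesis using key
    by (cases "v \<in> S"; cases "w \<in> S"; cases "fst w = k")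
       (auto simp: edge_gain_def moran.potential_jump_def fitness_def algebra_simps)
qed

lemma sum_drift_lb_nonneg:
  assumes fin: "finite S" and one_top: "card {x \<in> S. fst x = k} \<le> 1"
  shows "0 \<le> (\<Sum>x\<in>S. drift_lb S x)"
proof -
  define e where "e = (if (0,0,0) \<in> S then \<delta> else 0)"
  let ?c = "real (card {x \<in> S. fst x = k})"
  have "(\<Sum>x\<in>S. drift_lb S x)
      = (\<Sum>x\<in>S. if x = (0,0,0) then r else 0) - (\<Sum>x\<in>S. if fst x = k then e else 0)"
    unfolding drift_lb_def e_def by (rule sum_subtractf)
  also have "\<dots> = (if (0,0,0) \<in> S then r else 0) - ?c * e"
    using fin by (simp add: sum.delta' sum.inter_filter[symmetric])
  finally have eq: "(\<Sum>x\<in>S. drift_lb S x) = (if (0,0,0) \<in> S then r else 0) - ?c * e" .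
  have "0 \<le> \<delta>" using r_gt_1 l_pos m_real_pos by simp
  then have "?c * e \<le> 1 * e" using one_top by (intro mult_right_mono) (auto simp: e_def)
  then show ?thesis using eq delta_le_r r_gt_1 by (auto simp: e_def)
qed

lemma sum_in_gain:
  assumes "S \<subseteq> VV"
  shows "(\<Sum>v\<in>VV. \<Sum>w\<in>out_nbrs VV EE v. edge_gain S v w / deg v) = (\<Sum>w\<in>S. in_gain S w)"
proof -
  have "(\<Sum>v\<in>VV. \<Sum>w\<in>out_nbrs VV EE v. edge_gain S v w / deg v)
      = (\<Sum>v\<in>VV. \<Sum>w\<in>{w. w \<in> VV \<and> EE v w}. edge_gain S v w / deg v)"
    by (simp add: out_nbrs_def)
  also have "\<dots> = (\<Sum>w\<in>VV. \<Sum>v\<in>{v. v \<in> VV \<and> EE v w}. edge_gain S v w / deg v)"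
    by (rule sum.swap_restrict[OF finite_mf_V finite_mf_V])
  also have "\<dots> = (\<Sum>w\<in>VV. if w \<in> S then in_gain S w else 0)"
    by (intro sum.cong refl) (simp add: edge_gain_def in_gain_def)
  also have "\<dots> = (\<Sum>w\<in>S. in_gain S w)"
    using assms finite_mf_V by (simp add: sum.inter_restrict[symmetric] Int_absorb1)
  finally show ?thesis .
qed

lemma sum_mean_out_loss:
  assumes "S \<subseteq> VV"
  shows "(\<Sum>v\<in>VV. \<Sum>w\<in>out_nbrs VV EE v. (if v \<in> S then r * loss w else 0) / deg v)
       = (\<Sum>v\<in>S. r * mean_out_loss v)"
proof -
  have "(\<Sum>w\<in>out_nbrs VV EE v. (if v \<in> S then r * loss w else 0) / deg v)
      = (if v \<in> S then r * mean_out_loss v else 0)" for v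
    by (simp add: mean_out_loss_def sum_divide_distrib[symmetric] sum_distrib_left[symmetric])
  then show ?thesis
    using assms finite_mf_V by (simp add: sum.inter_restrict[symmetric] Int_absorb1)
qed

lemma sum_potential_jump_nonneg:
  assumes S: "S \<subseteq> VV" and one_top: "card {x \<in> S. fst x = k} \<le> 1"
  shows "0 \<le> (\<Sum>v\<in>VV. \<Sum>w\<in>out_nbrs VV EE v. fitness r S v * moran.potential_jump \<pi> S v w / deg v)"
proof -
  have "0 \<le> (\<Sum>x\<in>S. drift_lb S x)"
    using S finite_mf_V one_top by (intro sum_drift_lb_nonneg) (auto intro: finite_subset)
  also have "\<dots> \<le> (\<Sum>x\<in>S. in_gain S x - r * mean_out_loss x)"
    using S vertex_drift_ge by (intro sum_mono) auto
  also have "\<dots> = (\<Sum>x\<in>S. in_gain S x) - (\<Sum>x\<in>S. r * mean_out_loss x)"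
    by (rule sum_subtractf)
  also have "\<dots> = (\<Sum>v\<in>VV. \<Sum>w\<in>out_nbrs VV EE v.
      (edge_gain S v w - (if v \<in> S then r * loss w else 0)) / deg v)"
    by (simp add: sum_in_gain[OF S, symmetric] sum_mean_out_loss[OF S, symmetric]
        diff_divide_distrib sum_subtractf)
  also have "\<dots> \<le> (\<Sum>v\<in>VV. \<Sum>w\<in>out_nbrs VV EE v. fitness r S v * moran.potential_jump \<pi> S v w / deg v)"
    by (intro sum_mono divide_right_mono potential_jump_ge) auto
  finally show ?thesis .
qed

lemma top_count_weight_le:
  assumes "S \<subseteq> VV"
  shows "real (card {x \<in> S. fst x = k}) * top_weight \<le> (\<Sum>x\<in>S. \<pi> x)"
proof -
  have "real (card {x \<in> S. fst x = k}) * top_weight = (\<Sum>x\<in>{x \<in> S. fst x = k}. \<pi> x)"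
    by (simp add: mf_weight_def)
  also have "\<dots> \<le> (\<Sum>x\<in>S. \<pi> x)"
    using assms finite_mf_V weight_nonneg by (intro sum_mono2) (auto intro: finite_subset)
  finally show ?thesis .
qed

lemma two_le_card_top: "2 \<le> card {x \<in> VV. fst x = k}"
proof -
  have "2 \<le> m" using m_ge_2r r_gt_1 by linarith
  also have "\<dots> \<le> m ^ k" using k_ge_2 m_pos by (simp add: self_le_power)
  also have "\<dots> \<le> l * m ^ k" using l_pos by simp
  also have "\<dots> = card (mf_layer k l m k)" using k_ge_2 by (simp add: card_mf_layer)
  also have "\<dots> \<le> card {x \<in> VV. fst x = k}"
  proof (rule card_mono)
    show "finite {x \<in> VV. fst x = k}" using finite_mf_V by simp
  qed (auto simp: mf_V_def mf_layer_def)
  finally show ?thesis .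
qed

text \<open>The shift by \<open>exp (- 2 * top_weight)\<close> makes the potential nonpositive once two top
  vertices are mutants, so subharmonicity is only needed with at most one.\<close>
lemma extinction_prob_ge_potential:
  assumes "S0 \<subseteq> VV"
  shows "exp (- (\<Sum>x\<in>S0. \<pi> x)) - exp (- 2 * top_weight) \<le> extinction_prob VV EE r S0"
proof -
  define g where "g S = exp (- (\<Sum>x\<in>S. \<pi> x)) - exp (- 2 * top_weight)" for S
  have subharmonic: "g S \<le> moran_expectation VV EE r g S"
    if S: "S \<subseteq> VV" "extinction_prob VV EE r S < g S" for S
  proof -
    have "0 < g S" using S(2) moran.extinction_prob_nonneg[of S] by linarith
    then have "real (card {x \<in> S. fst x = k}) * top_weight < 2 * top_weight"
      using top_count_weight_le[OF S(1)] by (simp add: g_def)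
    then have "card {x \<in> S. fst x = k} \<le> 1" using top_weight_pos by simp
    then have "0 \<le> exp (- (\<Sum>x\<in>S. \<pi> x)) / total_fitness VV r S *
        (\<Sum>v\<in>VV. \<Sum>w\<in>out_nbrs VV EE v. fitness r S v * moran.potential_jump \<pi> S v w / deg v)"
      using sum_potential_jump_nonneg[OF S(1)] moran.total_fitness_pos[of S] by simp
    also have "\<dots> = moran_expectation VV EE r g S - g S"
      using S finite_mf_V unfolding g_def[abs_def]
      by (intro moran.moran_expectation_exp_potential[symmetric]) (auto intro: finite_subset)
    finally show ?thesis by simp
  qed
  have "2 * top_weight \<le> real (card {x \<in> VV. fst x = k}) * top_weight"
    using two_le_card_top top_weight_pos by (intro mult_right_mono) auto
  then have g_VV: "g VV \<le> 0"
    using top_count_weight_le[of VV] by (simp add: g_def)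
  have g_empty: "g {} \<le> 1" by (simp add: g_def)
  have "g S0 \<le> extinction_prob VV EE r S0"
    by (rule moran.subharmonic_le_extinction_prob[OF strongly_connected g_empty g_VV _ assms])
       (auto intro: subharmonic)
  then show ?thesis by (simp add: g_def)
qed

end

lemma exp_neg_ln_diff:
  fixes x :: real
  assumes "0 < x"
  shows "exp (- ln x) - exp (- 2 * ln x) = (x - 1) / x\<^sup>2"
proof -
  have "exp (- 2 * ln x) = exp (- ln x) ^ 2"
    using exp_of_nat_mult[of 2 "- ln x"] by simp
  then show ?thesis using assms by (simp add: exp_minus field_simps power2_eq_square)
qed

lemma reciprocal_le_exp_neg_ln_diff:
  fixes r L :: real
  assumes r: "1 < r" and L: "9 * r / 2 \<le> L"
  shows "1 / (r ^ k * L) \<le> exp (- ln (1 + 2 * r ^ (k+1))) - exp (- 2 * ln (1 + 2 * r ^ (k+1)))"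
proof -
  define R where "R = r ^ (k+1)"
  have R: "1 \<le> R" unfolding R_def using r by (intro one_le_power) simp
  have "1 / (r ^ k * L) \<le> 1 / (r ^ k * (9 * r / 2))"
    using r L by (intro divide_left_mono mult_left_mono mult_pos_pos) auto
  also have "\<dots> = 2 * R / (3 * R)\<^sup>2" unfolding R_def by (simp add: field_simps power2_eq_square)
  also have "\<dots> \<le> 2 * R / (1 + 2 * R)\<^sup>2"
    using R by (intro divide_left_mono power_mono mult_pos_pos) auto
  also have "\<dots> = exp (- ln (1 + 2 * R)) - exp (- 2 * ln (1 + 2 * R))"
    using R by (subst exp_neg_ln_diff) auto
  finally show ?thesis unfolding R_def .
qed

lemma (in metafunnel_fitness) extinction_prob_top_ge:
  assumes x0: "x0 \<in> mf_layer k l m k" and L: "9 * r / 2 \<le> L"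
  shows "1 / (r ^ k * L) \<le> extinction_prob VV EE r {x0}"
proof -
  have "x0 \<in> VV" using x0 k_ge_2 unfolding mf_V_def by auto
  moreover have "\<pi> x0 = top_weight" using x0 by (auto simp: mf_weight_def mf_layer_def)
  ultimately have "exp (- top_weight) - exp (- 2 * top_weight) \<le> extinction_prob VV EE r {x0}"
    using extinction_prob_ge_potential[of "{x0}"] by simp
  then show ?thesis using reciprocal_le_exp_neg_ln_diff[OF r_gt_1 L, of k] by linarith
qed

lemma metafunnel_extinction_prob_ge:
  fixes r L :: real
  assumes r: "1 < r" and "0 < l" "2 \<le> k" and m: "2 * r / ln r + 2 * r \<le> real m"
    and x0: "x0 \<in> mf_layer k l m k" and L: "9 * r / 2 \<le> L"
  shows "1 / (r ^ k * L) \<le> extinction_prob (mf_V k l m) (mf_E k l m) r {x0}"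
proof -
  have ln_r: "0 < ln r" using r by simp
  then have m_ge: "2 * r \<le> real m" "2 * r / ln r \<le> real m"
    using r m divide_nonneg_pos[of "2 * r" "ln r"] by linarith+
  then have "2 * r / real m \<le> ln r"
    using r ln_r by (simp add: divide_le_eq mult.commute)
  moreover have "1 \<le> m" using m_ge(1) r by linarith
  ultimately interpret metafunnel_fitness k l m r
    using assms m_ge by unfold_locales auto
  show ?thesis by (rule extinction_prob_top_ge[OF x0 L])
qed

lemma le_powr_sqrt_log:
  fixes r M x :: real
  assumes r: "1 < r" and M: "1 \<le> M" and x: "r powr (log r M)\<^sup>2 \<le> x"
  shows "M \<le> r powr sqrt (log r x)"
proof -
  have "0 < x" using x r by (smt (verit) powr_gt_zero)
  then have "(log r M)\<^sup>2 \<le> log r x"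
    using r x
    by (metis log_le_cancel_iff log_powr_cancel powr_gt_zero less_numeral_extra(4) less_trans
        zero_less_one)
  then have "log r M \<le> sqrt (log r x)"
    by (metis abs_ge_self order_trans real_sqrt_abs real_sqrt_le_mono)
  then have "r powr log r M \<le> r powr sqrt (log r x)" using r by (intro powr_mono) auto
  then show ?thesis using r M by simp
qed

lemma le_ln_powr:
  fixes L C x :: real
  assumes "exp L \<le> x" "1 \<le> L" "1 \<le> C"
  shows "L \<le> ln x powr C"
proof -
  have "L \<le> ln x" using assms by (metis exp_gt_zero ln_exp ln_le_cancel_iff less_le_trans)
  also have "\<dots> = ln x powr 1" using assms \<open>L \<le> ln x\<close> by simp
  also have "\<dots> \<le> ln x powr C" using assms \<open>L \<le> ln x\<close> by (intro powr_mono) auto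
  finally show ?thesis .
qed

theorem lemma5p28:
  fixes r :: real
  assumes "r > 1"
  shows "\<exists>n0::nat. n0 > 0 \<and>
    (\<forall>k l m :: nat. \<forall>x0.
       let n = card (mf_V k l m) in
       k > 0 \<and> l > 0 \<and> m > 0 \<and> n \<ge> n0 \<and>
       real m \<ge> r powr sqrt (log r (real n)) \<and>
       2 \<le> k \<and> real k \<le> sqrt (log r (real n)) \<and>
       x0 \<in> mf_layer k l m k \<longrightarrow>
       extinction_prob (mf_V k l m) (mf_E k l m) r {x0}
         \<ge> 1 / (r ^ k * ln (real n) powr (real_of_int (ceiling (2 * log r 20)) + 7)))"
proof -
  define C where "C = real_of_int (ceiling (2 * log r 20)) + 7"
  define M where "M = 2 * r / ln r + 2 * r"
  define n0 where "n0 = nat \<lceil>max (exp (9 * r / 2)) (r powr (log r M)\<^sup>2)\<rceil> + 1"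
  have "0 < log r 20" using assms by simp
  then have C: "1 \<le> C" using le_of_int_ceiling[of "2 * log r 20"] unfolding C_def by linarith
  have M: "1 \<le> M" using assms by (simp add: M_def add_increasing)
  have "1 / (r ^ k * ln (real (card (mf_V k l m))) powr C)
      \<le> extinction_prob (mf_V k l m) (mf_E k l m) r {x0}"
    if "0 < l" "n0 \<le> card (mf_V k l m)" "r powr sqrt (log r (card (mf_V k l m))) \<le> real m"
      "2 \<le> k" "x0 \<in> mf_layer k l m k" for k l m x0
  proof -
    have n: "exp (9 * r / 2) \<le> card (mf_V k l m)" "r powr (log r M)\<^sup>2 \<le> card (mf_V k l m)"
      using that(2) unfolding n0_def by linarith+
    have "M \<le> real m" using le_powr_sqrt_log[OF assms M n(2)] that(3) by linarith
    moreover have "9 * r / 2 \<le> ln (card (mf_V k l m)) powr C"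
      using assms n(1) C by (intro le_ln_powr) auto
    ultimately show ?thesis
      using assms that by (intro metafunnel_extinction_prob_ge) (auto simp: M_def)
  qed
  then show ?thesis
    unfolding Let_def C_def by (intro exI[of _ n0]) (auto simp: n0_def)
qed

end
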